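(* Let $X$ be a set, $U\subset 2^X$ a non-empty family of subsets and $\mu:U\to B_2$ a function. (a) If $U$ is closed under $\Delta$ and $\cap$, then the following are equivalent: (a.1) for all $A,B\in U$, $A\cap B=\emptyset$ implies $\mu(A\cup B)=\mu(A)\oplus\mu(B)$; (a.2) for all $A,B\in U$, $\mu(A\Delta B)=\mu(A)\oplus\mu(B)$. (b) If $U$ is closed under $\Theta$ and $\cup$, then the following are equivalent: (b.1) for all $A,B\in U$, $A\cup B=X$ implies $\mu(A\cap B)=\mu(A)\otimes\mu(B)$; (b.2) for all $A,B\in U$, $\mu(A\Theta B)=\mu(A)\otimes\mu(B)$.
   Context: $B_2=\{0,1\}$. On $B_2$, $\oplus$ is addition modulo 2 ($x\oplus y=1$ iff $x\neq y$) and $\otimes$ is the coincidence ($x\otimes y=1$ iff $x=y$). For subsets of $X$, $\Delta$ is the symmetric difference and $A\Theta B=X-(A\Delta B)$. *)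

theory Defs
  imports Main
begin

text \<open>B_2 = {0,1} is modelled by bool (0 = False, 1 = True).\<close>

definition b2_plus :: "bool \<Rightarrow> bool \<Rightarrow> bool" where
  "b2_plus x y = (x \<noteq> y)"

definition b2_times :: "bool \<Rightarrow> bool \<Rightarrow> bool" where
  "b2_times x y = (x = y)"

definition sym_diff :: "'a set \<Rightarrow> 'a set \<Rightarrow> 'a set" where
  "sym_diff A B = (A - B) \<union> (B - A)"

definition Theta :: "'a set \<Rightarrow> 'a set \<Rightarrow> 'a set \<Rightarrow> 'a set" where
  "Theta X A B = X - sym_diff A B"

end

theory Submission
  imports Defs
begin

text \<open>For (a), split A and B along the disjoint pieces A - B, A \<inter> B and B - A, all of which lie
in U; the contribution of A \<inter> B cancels because \<oplus> is addition mod 2.  Part (b) is the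
De Morgan dual of (a): complementation in X turns \<union> into \<inter>, \<Theta> into \<Delta> and covering pairs
into disjoint ones, while negation in B_2 turns \<otimes> into \<oplus>.\<close>

definition disjoint_additive :: "'a set set \<Rightarrow> ('a set \<Rightarrow> bool) \<Rightarrow> bool" where
  "disjoint_additive U \<mu> \<longleftrightarrow>
     (\<forall>A\<in>U. \<forall>B\<in>U. A \<inter> B = {} \<longrightarrow> \<mu> (A \<union> B) = b2_plus (\<mu> A) (\<mu> B))"

definition sym_diff_additive :: "'a set set \<Rightarrow> ('a set \<Rightarrow> bool) \<Rightarrow> bool" where
  "sym_diff_additive U \<mu> \<longleftrightarrow> (\<forall>A\<in>U. \<forall>B\<in>U. \<mu> (sym_diff A B) = b2_plus (\<mu> A) (\<mu> B))"

definition covering_multiplicative :: "'a set \<Rightarrow> 'a set set \<Rightarrow> ('a set \<Rightarrow> bool) \<Rightarrow> bool" where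
  "covering_multiplicative X U \<mu> \<longleftrightarrow>
     (\<forall>A\<in>U. \<forall>B\<in>U. A \<union> B = X \<longrightarrow> \<mu> (A \<inter> B) = b2_times (\<mu> A) (\<mu> B))"

definition Theta_multiplicative :: "'a set \<Rightarrow> 'a set set \<Rightarrow> ('a set \<Rightarrow> bool) \<Rightarrow> bool" where
  "Theta_multiplicative X U \<mu> \<longleftrightarrow> (\<forall>A\<in>U. \<forall>B\<in>U. \<mu> (Theta X A B) = b2_times (\<mu> A) (\<mu> B))"

lemma b2_plus_Not: "b2_plus (\<not> x) (\<not> y) = (\<not> b2_times x y)"
  by (auto simp: b2_plus_def b2_times_def)

lemma sym_diff_Diff_Diff:
  assumes "A \<subseteq> X" "B \<subseteq> X"
  shows "sym_diff (X - A) (X - B) = sym_diff A B"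
  using assms by (auto simp: sym_diff_def)

lemma sym_diff_additive_if_disjoint_additive:
  assumes sym_diff_closed: "\<And>A B. A \<in> U \<Longrightarrow> B \<in> U \<Longrightarrow> sym_diff A B \<in> U"
    and Int_closed: "\<And>A B. A \<in> U \<Longrightarrow> B \<in> U \<Longrightarrow> A \<inter> B \<in> U"
    and additive: "disjoint_additive U \<mu>"
  shows "sym_diff_additive U \<mu>"
  unfolding sym_diff_additive_def
proof (intro ballI)
  fix A B assume A: "A \<in> U" and B: "B \<in> U"
  have disjoint_sum: "\<mu> (C \<union> D) = b2_plus (\<mu> C) (\<mu> D)" if "C \<in> U" "D \<in> U" "C \<inter> D = {}" for C D
    using additive that by (simp add: disjoint_additive_def)
  have AB: "A \<inter> B \<in> U" using Int_closed A B .
  have "sym_diff A (A \<inter> B) = A - B" "sym_diff B (A \<inter> B) = B - A"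
    by (auto simp: sym_diff_def)
  then have A_B: "A - B \<in> U" and B_A: "B - A \<in> U"
    using sym_diff_closed A B AB by metis+
  have "\<mu> A = b2_plus (\<mu> (A - B)) (\<mu> (A \<inter> B))"
    using disjoint_sum[OF A_B AB] by (metis Diff_disjoint Int_Diff Un_Diff_Int inf_commute)
  moreover have "\<mu> B = b2_plus (\<mu> (B - A)) (\<mu> (A \<inter> B))"
    using disjoint_sum[OF B_A AB] by (metis Diff_disjoint Int_Diff Un_Diff_Int inf_commute)
  moreover have "\<mu> (sym_diff A B) = b2_plus (\<mu> (A - B)) (\<mu> (B - A))"
    using disjoint_sum[OF A_B B_A] by (metis Diff_disjoint Int_Diff inf_commute sym_diff_def)
  ultimately show "\<mu> (sym_diff A B) = b2_plus (\<mu> A) (\<mu> B)"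
    by (auto simp: b2_plus_def)
qed

lemma disjoint_additive_if_sym_diff_additive:
  assumes "sym_diff_additive U \<mu>"
  shows "disjoint_additive U \<mu>"
  unfolding disjoint_additive_def
proof (intro ballI impI)
  fix A B assume "A \<in> U" "B \<in> U" "A \<inter> B = {}"
  moreover from \<open>A \<inter> B = {}\<close> have "sym_diff A B = A \<union> B"
    by (auto simp: sym_diff_def)
  ultimately show "\<mu> (A \<union> B) = b2_plus (\<mu> A) (\<mu> B)"
    using assms by (metis sym_diff_additive_def)
qed

lemma disjoint_additive_iff_sym_diff_additive:
  assumes "\<And>A B. A \<in> U \<Longrightarrow> B \<in> U \<Longrightarrow> sym_diff A B \<in> U"
    and "\<And>A B. A \<in> U \<Longrightarrow> B \<in> U \<Longrightarrow> A \<inter> B \<in> U"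
  shows "disjoint_additive U \<mu> \<longleftrightarrow> sym_diff_additive U \<mu>"
  using assms sym_diff_additive_if_disjoint_additive disjoint_additive_if_sym_diff_additive
  by blast

lemma complements_sym_diff_Int_closed:
  assumes "U \<subseteq> Pow X"
    and Theta_closed: "\<And>A B. A \<in> U \<Longrightarrow> B \<in> U \<Longrightarrow> Theta X A B \<in> U"
    and Un_closed: "\<And>A B. A \<in> U \<Longrightarrow> B \<in> U \<Longrightarrow> A \<union> B \<in> U"
    and "C \<in> (-) X ` U" "D \<in> (-) X ` U"
  shows "sym_diff C D \<in> (-) X ` U" "C \<inter> D \<in> (-) X ` U"
proof -
  obtain A B where A: "A \<in> U" "C = X - A" and B: "B \<in> U" "D = X - B"
    using assms(4,5) by blast
  have "sym_diff C D = X - Theta X A B"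
    using A B assms(1) by (auto simp: Theta_def sym_diff_def)
  then show "sym_diff C D \<in> (-) X ` U"
    using Theta_closed[OF A(1) B(1)] by blast
  have "C \<inter> D = X - (A \<union> B)"
    using A B by blast
  then show "C \<inter> D \<in> (-) X ` U"
    using Un_closed[OF A(1) B(1)] by blast
qed

lemma disjoint_additive_complements_iff:
  assumes "U \<subseteq> Pow X"
  shows "disjoint_additive ((-) X ` U) (\<lambda>C. \<not> \<mu> (X - C)) \<longleftrightarrow> covering_multiplicative X U \<mu>"
proof -
  have "(X - A) \<inter> (X - B) = {} \<longleftrightarrow> A \<union> B = X"
    and "X - ((X - A) \<union> (X - B)) = A \<inter> B" and "X - (X - A) = A" and "X - (X - B) = B"
    if "A \<in> U" "B \<in> U" for A B
    using that assms by auto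
  then show ?thesis
    by (simp add: disjoint_additive_def covering_multiplicative_def b2_plus_Not)
qed

lemma sym_diff_additive_complements_iff:
  assumes "U \<subseteq> Pow X"
  shows "sym_diff_additive ((-) X ` U) (\<lambda>C. \<not> \<mu> (X - C)) \<longleftrightarrow> Theta_multiplicative X U \<mu>"
proof -
  have "X - sym_diff (X - A) (X - B) = Theta X A B"
    and "X - (X - A) = A" and "X - (X - B) = B"
    if "A \<in> U" "B \<in> U" for A B
    using that assms sym_diff_Diff_Diff[of A X B] by (auto simp: Theta_def)
  then show ?thesis
    by (simp add: sym_diff_additive_def Theta_multiplicative_def b2_plus_Not)
qed

theorem theorem2p1:
  fixes X :: "'a set" and U :: "'a set set" and \<mu> :: "'a set \<Rightarrow> bool"
  assumes "U \<subseteq> Pow X" and "U \<noteq> {}"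
  shows "((\<forall>A\<in>U. \<forall>B\<in>U. sym_diff A B \<in> U \<and> A \<inter> B \<in> U) \<longrightarrow>
            ((\<forall>A\<in>U. \<forall>B\<in>U. A \<inter> B = {} \<longrightarrow> \<mu> (A \<union> B) = b2_plus (\<mu> A) (\<mu> B))
             \<longleftrightarrow> (\<forall>A\<in>U. \<forall>B\<in>U. \<mu> (sym_diff A B) = b2_plus (\<mu> A) (\<mu> B))))
       \<and> ((\<forall>A\<in>U. \<forall>B\<in>U. Theta X A B \<in> U \<and> A \<union> B \<in> U) \<longrightarrow>
            ((\<forall>A\<in>U. \<forall>B\<in>U. A \<union> B = X \<longrightarrow> \<mu> (A \<inter> B) = b2_times (\<mu> A) (\<mu> B))
             \<longleftrightarrow> (\<forall>A\<in>U. \<forall>B\<in>U. \<mu> (Theta X A B) = b2_times (\<mu> A) (\<mu> B))))"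
proof (intro conjI impI)
  assume "\<forall>A\<in>U. \<forall>B\<in>U. sym_diff A B \<in> U \<and> A \<inter> B \<in> U"
  then have "disjoint_additive U \<mu> \<longleftrightarrow> sym_diff_additive U \<mu>"
    by (intro disjoint_additive_iff_sym_diff_additive) simp_all
  then show "(\<forall>A\<in>U. \<forall>B\<in>U. A \<inter> B = {} \<longrightarrow> \<mu> (A \<union> B) = b2_plus (\<mu> A) (\<mu> B))
             \<longleftrightarrow> (\<forall>A\<in>U. \<forall>B\<in>U. \<mu> (sym_diff A B) = b2_plus (\<mu> A) (\<mu> B))"
    unfolding disjoint_additive_def sym_diff_additive_def .
next
  assume "\<forall>A\<in>U. \<forall>B\<in>U. Theta X A B \<in> U \<and> A \<union> B \<in> U"
  then have "sym_diff C D \<in> (-) X ` U" "C \<inter> D \<in> (-) X ` U"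
    if "C \<in> (-) X ` U" "D \<in> (-) X ` U" for C D
    using complements_sym_diff_Int_closed[OF assms(1) _ _ that] by simp_all
  then have "disjoint_additive ((-) X ` U) (\<lambda>C. \<not> \<mu> (X - C))
               \<longleftrightarrow> sym_diff_additive ((-) X ` U) (\<lambda>C. \<not> \<mu> (X - C))"
    by (rule disjoint_additive_iff_sym_diff_additive)
  then have "covering_multiplicative X U \<mu> \<longleftrightarrow> Theta_multiplicative X U \<mu>"
    unfolding disjoint_additive_complements_iff[OF assms(1)]
      sym_diff_additive_complements_iff[OF assms(1)] .
  then show "(\<forall>A\<in>U. \<forall>B\<in>U. A \<union> B = X \<longrightarrow> \<mu> (A \<inter> B) = b2_times (\<mu> A) (\<mu> B))
             \<longleftrightarrow> (\<forall>A\<in>U. \<forall>B\<in>U. \<mu> (Theta X A B) = b2_times (\<mu> A) (\<mu> B))"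
    unfolding covering_multiplicative_def Theta_multiplicative_def .
qed

end
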